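(* Let $U$ be a finite nonempty set, $R$ an equivalence relation on $U$, and $M(R)$ the support matroid induced by $R$. Then the family of closed sets of $M(R)$ is $$\mathbf{L}(R)=\Big\{X\subseteq U : \bigcup_{x\in X} RN(x)=X\Big\}.$$
   Context: For $x\in U$, $RN(x)=\{y\in U\mid xRy\}$; $R^{*}(X)=\{x\in U\mid RN(x)\cap X\neq\emptyset\}$. Let $\mathbf{S}(R)=\{X\subseteq U\mid R^{*}(X)=U\}$. The support matroid $M(R)=(U,\mathbf{I}(R))$ is the matroid on $U$ whose independent sets $\mathbf{I}(R)$ are the subsets of inclusion-minimal members of $\mathbf{S}(R)$. For a matroid $(U,\mathbf{I})$, the rank is $r(X)=\max\{|I|\mid I\subseteq X, I\in\mathbf{I}\}$, the closure is $cl(X)=\{e\in U\mid r(X)=r(X\cup\{e\})\}$, and $X$ is closed if $cl(X)=X$. *)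

theory Defs
  imports Main
begin

definition RN :: "'a set \<Rightarrow> 'a rel \<Rightarrow> 'a \<Rightarrow> 'a set" where
  "RN U R x = {y \<in> U. (x, y) \<in> R}"

definition upper_approx :: "'a set \<Rightarrow> 'a rel \<Rightarrow> 'a set \<Rightarrow> 'a set" where
  "upper_approx U R X = {x \<in> U. RN U R x \<inter> X \<noteq> {}}"

definition support_sets :: "'a set \<Rightarrow> 'a rel \<Rightarrow> 'a set set" where
  "support_sets U R = {X. X \<subseteq> U \<and> upper_approx U R X = U}"

definition minimal_support_sets :: "'a set \<Rightarrow> 'a rel \<Rightarrow> 'a set set" where
  "minimal_support_sets U R =
     {X \<in> support_sets U R. \<forall>Y \<in> support_sets U R. Y \<subseteq> X \<longrightarrow> Y = X}"

definition support_indep :: "'a set \<Rightarrow> 'a rel \<Rightarrow> 'a set set" where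
  "support_indep U R = {I. \<exists>B \<in> minimal_support_sets U R. I \<subseteq> B}"

definition mrank :: "'a set set \<Rightarrow> 'a set \<Rightarrow> nat" where
  "mrank Ind X = Max {card I | I. I \<subseteq> X \<and> I \<in> Ind}"

definition mclosure :: "'a set \<Rightarrow> 'a set set \<Rightarrow> 'a set \<Rightarrow> 'a set" where
  "mclosure U Ind X = {e \<in> U. mrank Ind X = mrank Ind (X \<union> {e})}"

definition closed_sets :: "'a set \<Rightarrow> 'a set set \<Rightarrow> 'a set set" where
  "closed_sets U Ind = {X. X \<subseteq> U \<and> mclosure U Ind X = X}"

end

theory Submission
  imports Defs
begin

text \<open>For an equivalence relation a set supports U exactly when it meets every class, so the
  minimal support sets are the transversals of U/R and the independent sets are the partial
  transversals: the support matroid is the partition matroid of U/R. Its rank function counts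
  the classes a set meets, hence adding y leaves the rank unchanged exactly when the class of y
  is already met, and the closure of X is the union of the classes meeting X.\<close>

definition partial_transversal :: "'a set \<Rightarrow> 'a rel \<Rightarrow> 'a set \<Rightarrow> bool" where
  "partial_transversal U R I \<longleftrightarrow> I \<subseteq> U \<and> (\<forall>a\<in>I. \<forall>b\<in>I. (a, b) \<in> R \<longrightarrow> a = b)"

lemma support_sets_iff:
  assumes "equiv U R"
  shows "X \<in> support_sets U R \<longleftrightarrow> X \<subseteq> U \<and> (\<forall>u\<in>U. \<exists>x\<in>X. (u, x) \<in> R)"
  using assms unfolding support_sets_def upper_approx_def RN_def equiv_def refl_on_def
  by blast

lemma partial_transversal_subset:
  "partial_transversal U R I \<Longrightarrow> J \<subseteq> I \<Longrightarrow> partial_transversal U R J"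
  unfolding partial_transversal_def by blast

lemma partial_transversal_insert:
  assumes "sym R" and "partial_transversal U R I" and "u \<in> U" and "\<forall>i\<in>I. (u, i) \<notin> R"
  shows "partial_transversal U R (insert u I)"
  using assms unfolding partial_transversal_def sym_def by blast

lemma partial_transversal_extend:
  assumes "finite U" and "equiv U R" and "A \<subseteq> U"
    and "partial_transversal U R I" and "I \<subseteq> A"
  obtains J where "I \<subseteq> J" and "J \<subseteq> A" and "partial_transversal U R J"
    and "\<forall>a\<in>A. \<exists>j\<in>J. (a, j) \<in> R"
proof -
  have "sym R"
    using \<open>equiv U R\<close> unfolding equiv_def by blast
  let ?P = "{J. I \<subseteq> J \<and> J \<subseteq> A \<and> partial_transversal U R J}"
  have "finite ?P"
    using \<open>finite U\<close> \<open>A \<subseteq> U\<close> by (auto intro: finite_subset[of _ "Pow U"])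
  moreover have "I \<in> ?P"
    using assms by blast
  ultimately obtain J where J: "J \<in> ?P" and maximal: "\<forall>K\<in>?P. J \<subseteq> K \<longrightarrow> J = K"
    by (meson finite_has_maximal2)
  have "\<exists>j\<in>J. (a, j) \<in> R" if "a \<in> A" for a
  proof (rule ccontr)
    assume "\<not> (\<exists>j\<in>J. (a, j) \<in> R)"
    with J \<open>a \<in> A\<close> \<open>A \<subseteq> U\<close> have "partial_transversal U R (insert a J)"
      by (intro partial_transversal_insert[OF \<open>sym R\<close>]) auto
    with J \<open>a \<in> A\<close> have "insert a J \<in> ?P"
      by blast
    then have "insert a J = J"
      using maximal by blast
    moreover have "(a, a) \<in> R"
      using \<open>a \<in> A\<close> \<open>A \<subseteq> U\<close> \<open>equiv U R\<close> equiv_class_self by fastforce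
    ultimately show False
      using \<open>\<not> (\<exists>j\<in>J. (a, j) \<in> R)\<close> by blast
  qed
  with J that show thesis by blast
qed

lemma minimal_support_set_partial_transversal:
  assumes "equiv U R" and "B \<in> minimal_support_sets U R"
  shows "partial_transversal U R B"
proof -
  have support: "B \<subseteq> U" "\<forall>u\<in>U. \<exists>x\<in>B. (u, x) \<in> R"
    and minimal: "\<forall>Y \<in> support_sets U R. Y \<subseteq> B \<longrightarrow> Y = B"
    using assms(2) support_sets_iff[OF assms(1)] unfolding minimal_support_sets_def by auto
  have "a = b" if "a \<in> B" "b \<in> B" "(a, b) \<in> R" for a b
  proof (rule ccontr)
    assume "a \<noteq> b"
    txt \<open>Then everything covered by b is also covered by a, so b is superfluous.\<close>
    have "\<exists>x\<in>B - {b}. (u, x) \<in> R" if "u \<in> U" for u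
    proof -
      obtain x where "x \<in> B" "(u, x) \<in> R"
        using support \<open>u \<in> U\<close> by blast
      moreover have "(u, a) \<in> R" if "x = b"
        using \<open>(u, x) \<in> R\<close> \<open>(a, b) \<in> R\<close> \<open>equiv U R\<close> \<open>x = b\<close>
        unfolding equiv_def sym_def trans_def by blast
      ultimately show ?thesis
        using \<open>a \<in> B\<close> \<open>a \<noteq> b\<close> by blast
    qed
    then have "B - {b} \<in> support_sets U R"
      unfolding support_sets_iff[OF \<open>equiv U R\<close>] using support by blast
    then show False
      using minimal \<open>b \<in> B\<close> by blast
  qed
  then show ?thesis
    using support unfolding partial_transversal_def by blast
qed

lemma partial_transversal_support_set_minimal:
  assumes "equiv U R" and "partial_transversal U R B" and "B \<in> support_sets U R"
  shows "B \<in> minimal_support_sets U R"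
proof -
  have "B \<subseteq> Y" if "Y \<in> support_sets U R" "Y \<subseteq> B" for Y
  proof
    fix b assume "b \<in> B"
    moreover have "B \<subseteq> U"
      using assms(2) unfolding partial_transversal_def by blast
    moreover have "\<forall>u\<in>U. \<exists>y\<in>Y. (u, y) \<in> R"
      using that(1) unfolding support_sets_iff[OF \<open>equiv U R\<close>] by blast
    ultimately obtain y where "y \<in> Y" "(b, y) \<in> R"
      by blast
    then show "b \<in> Y"
      using assms(2) that(2) \<open>b \<in> B\<close> unfolding partial_transversal_def by blast
  qed
  with assms(3) show ?thesis
    unfolding minimal_support_sets_def by blast
qed

lemma support_indep_eq_partial_transversals:
  assumes "finite U" and "equiv U R"
  shows "support_indep U R = {I. partial_transversal U R I}"
proof (intro set_eqI iffI)
  fix I assume "I \<in> support_indep U R"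
  then obtain B where "B \<in> minimal_support_sets U R" "I \<subseteq> B"
    unfolding support_indep_def by blast
  then show "I \<in> {I. partial_transversal U R I}"
    using minimal_support_set_partial_transversal[OF \<open>equiv U R\<close>] partial_transversal_subset
    by blast
next
  fix I assume "I \<in> {I. partial_transversal U R I}"
  then have "partial_transversal U R I" and "I \<subseteq> U"
    unfolding partial_transversal_def by auto
  then obtain B where "I \<subseteq> B" "B \<subseteq> U" "partial_transversal U R B"
    and "\<forall>u\<in>U. \<exists>b\<in>B. (u, b) \<in> R"
    using partial_transversal_extend[OF assms order_refl] by blast
  then have "B \<in> minimal_support_sets U R"
    by (intro partial_transversal_support_set_minimal[OF \<open>equiv U R\<close>])
      (simp_all add: support_sets_iff[OF \<open>equiv U R\<close>])
  then show "I \<in> support_indep U R"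
    using \<open>I \<subseteq> B\<close> unfolding support_indep_def by blast
qed

lemma card_quotient_partial_transversal:
  assumes "equiv U R" and "partial_transversal U R I"
  shows "card (I // R) = card I"
proof -
  have "inj_on (\<lambda>x. R `` {x}) I"
  proof (rule inj_onI)
    fix a b assume "a \<in> I" "b \<in> I" "R `` {a} = R `` {b}"
    moreover have "b \<in> U"
      using \<open>b \<in> I\<close> assms(2) unfolding partial_transversal_def by blast
    ultimately have "(a, b) \<in> R"
      using eq_equiv_class[OF _ \<open>equiv U R\<close>] by blast
    with \<open>a \<in> I\<close> \<open>b \<in> I\<close> show "a = b"
      using assms(2) unfolding partial_transversal_def by blast
  qed
  moreover have "I // R = (\<lambda>x. R `` {x}) ` I"
    unfolding quotient_def by blast
  ultimately show ?thesis
    by (simp add: card_image)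
qed

lemma quotient_eq_if_covering:
  assumes "equiv U R" and "J \<subseteq> A" and "\<forall>a\<in>A. \<exists>j\<in>J. (a, j) \<in> R"
  shows "J // R = A // R"
proof
  show "J // R \<subseteq> A // R"
    using assms(2) unfolding quotient_def by blast
  show "A // R \<subseteq> J // R"
  proof
    fix C assume "C \<in> A // R"
    then obtain a where "a \<in> A" "C = R `` {a}"
      by (rule quotientE)
    then obtain j where "j \<in> J" "(a, j) \<in> R"
      using assms(3) by blast
    then show "C \<in> J // R"
      using equiv_class_eq[OF \<open>equiv U R\<close>] \<open>C = R `` {a}\<close> quotientI by metis
  qed
qed

lemma finite_quotient_Int:
  assumes "finite U" and "equiv U R"
  shows "finite ((A \<inter> U) // R)"
proof -
  have "(A \<inter> U) // R \<subseteq> U // R"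
    unfolding quotient_def by blast
  then show ?thesis
    by (rule finite_subset[OF _ finite_quotient[OF assms(1) equiv_type[OF assms(2)]]])
qed

lemma card_partial_transversal_le:
  assumes "finite U" and "equiv U R" and "partial_transversal U R I" and "I \<subseteq> A"
  shows "card I \<le> card ((A \<inter> U) // R)"
proof -
  have "card I = card (I // R)"
    using card_quotient_partial_transversal[OF assms(2,3)] by simp
  also have "\<dots> \<le> card ((A \<inter> U) // R)"
  proof (rule card_mono[OF finite_quotient_Int[OF assms(1,2)]])
    show "I // R \<subseteq> (A \<inter> U) // R"
      using assms(3,4) unfolding quotient_def partial_transversal_def by blast
  qed
  finally show ?thesis .
qed

lemma mrank_partial_transversals:
  assumes "finite U" and "equiv U R"
  shows "mrank {I. partial_transversal U R I} X = card ((X \<inter> U) // R)"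
proof -
  let ?ranks = "{card I | I. I \<subseteq> X \<and> I \<in> {I. partial_transversal U R I}}"
  have "?ranks \<subseteq> card ` Pow U"
    unfolding partial_transversal_def by auto
  then have "finite ?ranks"
    by (rule finite_subset) (simp add: assms(1))
  moreover have "r \<le> card ((X \<inter> U) // R)" if "r \<in> ?ranks" for r
    using that card_partial_transversal_le[OF assms] by blast
  moreover have "card ((X \<inter> U) // R) \<in> ?ranks"
  proof -
    have "partial_transversal U R {}"
      unfolding partial_transversal_def by blast
    then obtain J where J: "J \<subseteq> X \<inter> U" "partial_transversal U R J"
      and covering: "\<forall>a\<in>X \<inter> U. \<exists>j\<in>J. (a, j) \<in> R"
      by (rule partial_transversal_extend[OF assms Int_lower2 _ empty_subsetI]) blast+
    have "card ((X \<inter> U) // R) = card J"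
      using quotient_eq_if_covering[OF assms(2) J(1) covering]
        card_quotient_partial_transversal[OF assms(2) J(2)] by simp
    with J(1,2) show ?thesis
      by blast
  qed
  ultimately show ?thesis
    unfolding mrank_def by (rule Max_eqI)
qed

lemma mclosure_partial_transversals:
  assumes "finite U" and "equiv U R"
  shows "mclosure U {I. partial_transversal U R I} X = {y \<in> U. \<exists>x\<in>X. (x, y) \<in> R}"
proof -
  have rank_unchanged_iff:
    "card ((X \<inter> U) // R) = card (insert y (X \<inter> U) // R) \<longleftrightarrow> (\<exists>x\<in>X. (x, y) \<in> R)"
    if "y \<in> U" for y
  proof -
    have "insert y (X \<inter> U) // R = insert (R `` {y}) ((X \<inter> U) // R)"
      unfolding quotient_def by blast
    moreover have "finite ((X \<inter> U) // R)"
      by (rule finite_quotient_Int[OF assms])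
    moreover have "R `` {y} \<in> (X \<inter> U) // R \<longleftrightarrow> (\<exists>x\<in>X. (x, y) \<in> R)"
      using eq_equiv_class_iff[OF assms(2) _ \<open>y \<in> U\<close>] equiv_class_eq_iff[OF assms(2)]
      unfolding quotient_def by blast
    ultimately show ?thesis
      by (simp add: card_insert_if)
  qed
  then show ?thesis
    unfolding mclosure_def mrank_partial_transversals[OF assms]
    by (intro Collect_cong) (auto simp: Int_insert_left rank_unchanged_iff)
qed

theorem proposition9:
  fixes U :: "'a set" and R :: "'a rel"
  assumes "finite U" and "U \<noteq> {}" and "equiv U R"
  shows "closed_sets U (support_indep U R) = {X. X \<subseteq> U \<and> (\<Union>x\<in>X. RN U R x) = X}"
proof -
  have "{y \<in> U. \<exists>x\<in>X. (x, y) \<in> R} = (\<Union>x\<in>X. RN U R x)" for X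
    unfolding RN_def by auto
  then show ?thesis
    unfolding closed_sets_def support_indep_eq_partial_transversals[OF assms(1,3)]
      mclosure_partial_transversals[OF assms(1,3)] by auto
qed

end
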